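(* Let $\mu_1,\mu_2\in(0,1)$ with $\mu_1>\mu_2$, and let $\mathcal{H}_\mu(\rho)=H_0\rho H_0^\dagger+H_1\rho H_1^\dagger$ with $H_0=|0\rangle\langle0|+\sqrt{\mu}\,|1\rangle\langle1|$ and $H_1=\sqrt{1-\mu}\,|0\rangle\langle1|$ be the qubit amplitude damping channel. Then all maximally entangled states of $\mathbb{C}^2\otimes\mathbb{C}^2$ are equivalent probes for distinguishing $\mathcal{H}_{\mu_1}$ and $\mathcal{H}_{\mu_2}$: the quantity $\|(\mathcal{H}_{\mu_1}\otimes\mathrm{id})(\rho_{AB})-(\mathcal{H}_{\mu_2}\otimes\mathrm{id})(\rho_{AB})\|_1$ (hence the success probability) takes the same value for every maximally entangled pure state $\rho_{AB}$.
   Context: For two channels chosen with equal priors $1/2$ and a bipartite probe $\rho_{AB}$ (channel acting on subsystem $A$), the single-shot success probability is $\frac12+\frac14\|(\mathcal{N}_1\otimes\mathrm{id})(\rho_{AB})-(\mathcal{N}_2\otimes\mathrm{id})(\rho_{AB})\|_1$, where $\|\cdot\|_1$ is the trace norm. A two-qubit pure state is maximally entangled if its reduced states are $\mathbb{I}_2/2$. Probes are equivalent if they give the same success probability. *)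

theory Defs
  imports "Jordan_Normal_Form.Char_Poly"
begin

(* Two-qubit system A (x) B; basis index of |a>|b> is 2*a + b. *)

definition adj :: "complex mat \<Rightarrow> complex mat" where
  "adj M = mat (dim_col M) (dim_row M) (\<lambda>(i,j). cnj (M $$ (j,i)))"

(* Trace norm = sum of singular values = sum of square roots of the eigenvalues
   (with multiplicity) of M^dagger M. *)
definition trace_norm :: "complex mat \<Rightarrow> real" where
  "trace_norm M = sum_mset (image_mset (\<lambda>x. sqrt (Re x)) (proots (char_poly (adj M * M))))"

definition kron :: "complex mat \<Rightarrow> complex mat \<Rightarrow> complex mat" where
  "kron X Y = mat (dim_row X * dim_row Y) (dim_col X * dim_col Y)
     (\<lambda>(i,j). X $$ (i div dim_row Y, j div dim_col Y) * Y $$ (i mod dim_row Y, j mod dim_col Y))"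

definition H0 :: "real \<Rightarrow> complex mat" where
  "H0 \<mu> = mat 2 2 (\<lambda>(i,j). if i = 0 \<and> j = 0 then 1
                            else if i = 1 \<and> j = 1 then complex_of_real (sqrt \<mu>) else 0)"

definition H1 :: "real \<Rightarrow> complex mat" where
  "H1 \<mu> = mat 2 2 (\<lambda>(i,j). if i = 0 \<and> j = 1 then complex_of_real (sqrt (1 - \<mu>)) else 0)"

definition amp_damp_A :: "real \<Rightarrow> complex mat \<Rightarrow> complex mat" where
  "amp_damp_A \<mu> \<rho> =
     kron (H0 \<mu>) (1\<^sub>m 2) * \<rho> * adj (kron (H0 \<mu>) (1\<^sub>m 2))
   + kron (H1 \<mu>) (1\<^sub>m 2) * \<rho> * adj (kron (H1 \<mu>) (1\<^sub>m 2))"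

definition ptrace_B :: "complex mat \<Rightarrow> complex mat" where
  "ptrace_B \<rho> = mat 2 2 (\<lambda>(a,a'). \<Sum>b<2. \<rho> $$ (2*a+b, 2*a'+b))"

definition ptrace_A :: "complex mat \<Rightarrow> complex mat" where
  "ptrace_A \<rho> = mat 2 2 (\<lambda>(b,b'). \<Sum>a<2. \<rho> $$ (2*a+b, 2*a+b'))"

definition proj :: "complex vec \<Rightarrow> complex mat" where
  "proj \<psi> = mat (dim_vec \<psi>) (dim_vec \<psi>) (\<lambda>(i,j). \<psi> $ i * cnj (\<psi> $ j))"

definition max_ent_pure :: "complex mat \<Rightarrow> bool" where
  "max_ent_pure \<rho> \<longleftrightarrow>
     (\<exists>\<psi>. \<psi> \<in> carrier_vec 4 \<and> (\<Sum>i<4. (cmod (\<psi> $ i))\<^sup>2) = 1 \<and> \<rho> = proj \<psi>)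
     \<and> ptrace_A \<rho> = (1/2) \<cdot>\<^sub>m 1\<^sub>m 2 \<and> ptrace_B \<rho> = (1/2) \<cdot>\<^sub>m 1\<^sub>m 2"

end

theory Submission
  imports Defs
begin

text \<open>Every maximally entangled pure state is obtained from the Bell state \<open>\<Phi>\<^sup>+\<close> by a unitary
  \<open>1 \<otimes> V\<close> acting on the reference system B: if \<open>\<psi> = \<Sum> \<psi>\<^sub>a\<^sub>b |a\<rangle>|b\<rangle>\<close>, then
  \<open>V\<^sub>b\<^sub>a = \<surd>2 \<psi>\<^sub>a\<^sub>b\<close>, and \<open>V V\<^sup>\<dagger> = 2 tr\<^sub>A |\<psi>\<rangle>\<langle>\<psi>|\<close> is the identity exactly when the
  reduced state is maximally mixed. The channel acts on A only, so it commutes with conjugation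
  by \<open>1 \<otimes> V\<close>; hence the difference of the two output states for \<open>\<psi>\<close> is unitarily conjugate to
  the one for \<open>\<Phi>\<^sup>+\<close>, and the trace norm is unitarily invariant.\<close>

lemma adj_carrier_mat [simp]: "A \<in> carrier_mat n m \<Longrightarrow> adj A \<in> carrier_mat m n"
  by (simp add: adj_def)

lemma adj_dim [simp]: "dim_row (adj A) = dim_col A" "dim_col (adj A) = dim_row A"
  by (simp_all add: adj_def)

lemma adj_index [simp]: "i < dim_col A \<Longrightarrow> j < dim_row A \<Longrightarrow> adj A $$ (i, j) = cnj (A $$ (j, i))"
  by (simp add: adj_def)

lemma adj_adj [simp]: "adj (adj A) = A"
  by (intro eq_matI) auto

lemma adj_mult:
  assumes "A \<in> carrier_mat n m" "B \<in> carrier_mat m k"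
  shows "adj (A * B) = adj B * adj A"
  using assms by (intro eq_matI) (auto simp: scalar_prod_def mult.commute)

lemma adj_one [simp]: "adj (1\<^sub>m n) = 1\<^sub>m n"
  by (intro eq_matI) auto

lemma less_mult_imp_div_mod_less:
  fixes i m n :: nat
  assumes "i < m * n"
  shows "i div n < m" "i mod n < n"
  using assms by (auto simp: less_mult_imp_div_less intro!: mod_less_divisor Nat.gr0I)

lemma kron_carrier [simp]: "kron X Y \<in> carrier_mat (dim_row X * dim_row Y) (dim_col X * dim_col Y)"
  by (simp add: kron_def)

lemma kron_dim [simp]:
  "dim_row (kron X Y) = dim_row X * dim_row Y" "dim_col (kron X Y) = dim_col X * dim_col Y"
  by (simp_all add: kron_def)

lemma kron_index [simp]:
  "i < dim_row X * dim_row Y \<Longrightarrow> j < dim_col X * dim_col Y \<Longrightarrow>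
   kron X Y $$ (i, j) = X $$ (i div dim_row Y, j div dim_col Y) * Y $$ (i mod dim_row Y, j mod dim_col Y)"
  by (simp add: kron_def)

lemma sum_lessThan_mult_split:
  fixes m n :: nat
  shows "(\<Sum>k < m * n. f k) = (\<Sum>a < m. \<Sum>b < n. f (a * n + b))"
proof -
  have "(\<Sum>k < m * n. f k) = (\<Sum>a < m. \<Sum>k \<in> {a * n ..< a * n + n}. f k)"
    by (rule sum.nat_group[symmetric])
  also have "\<dots> = (\<Sum>a < m. \<Sum>b < n. f (a * n + b))"
    by (rule sum.cong[OF refl]) (simp add: sum.atLeastLessThan_shift_0[of f] atLeast0LessThan)
  finally show ?thesis .
qed

lemma kron_mult:
  fixes A B C D :: "complex mat"
  assumes "dim_row C = dim_col A" "dim_row D = dim_col B"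
  shows "kron A B * kron C D = kron (A * C) (B * D)"
proof (rule eq_matI)
  fix i j assume "i < dim_row (kron (A * C) (B * D))" "j < dim_col (kron (A * C) (B * D))"
  then have i: "i < dim_row A * dim_row B" and j: "j < dim_col C * dim_col D" by simp_all
  have "(kron A B * kron C D) $$ (i, j) =
    (\<Sum>a < dim_col A. \<Sum>b < dim_col B. (A $$ (i div dim_row B, a) * C $$ (a, j div dim_col D))
        * (B $$ (i mod dim_row B, b) * D $$ (b, j mod dim_col D)))"
    using i j assms
    by (simp add: scalar_prod_def atLeast0LessThan sum_lessThan_mult_split mult_ac)
  also have "\<dots> = kron (A * C) (B * D) $$ (i, j)"
    using i j assms less_mult_imp_div_mod_less[OF i] less_mult_imp_div_mod_less[OF j]
    by (simp add: scalar_prod_def atLeast0LessThan sum_product)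
  finally show "(kron A B * kron C D) $$ (i, j) = kron (A * C) (B * D) $$ (i, j)" .
qed (use assms in simp_all)

lemma adj_kron: "adj (kron A B) = kron (adj A) (adj B)"
proof (rule eq_matI)
  fix i j assume "i < dim_row (kron (adj A) (adj B))" "j < dim_col (kron (adj A) (adj B))"
  then have i: "i < dim_col A * dim_col B" and j: "j < dim_row A * dim_row B" by simp_all
  then show "adj (kron A B) $$ (i, j) = kron (adj A) (adj B) $$ (i, j)" using less_mult_imp_div_mod_less[OF i] less_mult_imp_div_mod_less[OF j] by simp
qed simp_all

lemma kron_one [simp]: "kron (1\<^sub>m m) (1\<^sub>m n) = 1\<^sub>m (m * n)"
proof (rule eq_matI)
  fix i j assume "i < dim_row (1\<^sub>m (m * n) :: complex mat)" "j < dim_col (1\<^sub>m (m * n) :: complex mat)"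
  then have i: "i < m * n" and j: "j < m * n" by simp_all
  have "(i div n = j div n \<and> i mod n = j mod n) \<longleftrightarrow> i = j"
    by (metis div_mult_mod_eq)
  then show "kron (1\<^sub>m m) (1\<^sub>m n) $$ (i, j) = 1\<^sub>m (m * n) $$ (i, j)"
    using i j less_mult_imp_div_mod_less[OF i] less_mult_imp_div_mod_less[OF j] by auto
qed simp_all

definition unitary_mat :: "nat \<Rightarrow> complex mat \<Rightarrow> bool" where
  "unitary_mat n U \<longleftrightarrow> U \<in> carrier_mat n n \<and> U * adj U = 1\<^sub>m n"

lemma unitary_mat_adj_mult:
  assumes "unitary_mat n U"
  shows "adj U * U = 1\<^sub>m n"
  using assms mat_mult_left_right_inverse[of U n "adj U"] by (auto simp: unitary_mat_def)

lemma unitary_mat_kron: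
  assumes "unitary_mat m U" "unitary_mat n V"
  shows "unitary_mat (m * n) (kron U V)"
  using assms by (auto simp: unitary_mat_def adj_kron kron_mult)

lemma unitary_mat_one: "unitary_mat n (1\<^sub>m n)"
  by (simp add: unitary_mat_def)

lemma adj_mult_unitary_sandwich:
  assumes U: "unitary_mat n U" and X: "X \<in> carrier_mat n n"
  shows "adj (U * X * adj U) * (U * X * adj U) = U * (adj X * X) * adj U"
proof -
  have U': "U \<in> carrier_mat n n" "adj U \<in> carrier_mat n n" and X': "adj X \<in> carrier_mat n n"
    using U X by (auto simp: unitary_mat_def)
  have "adj (U * X * adj U) = U * adj X * adj U"
    using U' X X' by (simp add: adj_mult[of _ n n _ n] assoc_mult_mat[of _ n n _ n _ n])
  then have "adj (U * X * adj U) * (U * X * adj U) = U * adj X * (adj U * U) * X * adj U"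
    using U' X X' by (simp add: assoc_mult_mat[of _ n n _ n _ n] mult_carrier_mat[of _ n n _ n])
  also have "\<dots> = U * (adj X * X) * adj U"
    using U' X X' unitary_mat_adj_mult[OF U]
    by (simp add: assoc_mult_mat[of _ n n _ n _ n] mult_carrier_mat[of _ n n _ n])
  finally show ?thesis .
qed

lemma trace_norm_unitary_sandwich:
  assumes U: "unitary_mat n U" and X: "X \<in> carrier_mat n n"
  shows "trace_norm (U * X * adj U) = trace_norm X"
proof -
  have "similar_mat (U * (adj X * X) * adj U) (adj X * X)"
    unfolding similar_mat_def similar_mat_wit_def
    using U X unitary_mat_adj_mult[OF U]
    by (intro exI[of _ U] exI[of _ "adj U"]) (auto simp: unitary_mat_def Let_def)
  then show ?thesis
    unfolding trace_norm_def adj_mult_unitary_sandwich[OF U X] by (simp add: char_poly_similar)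
qed

lemma proj_mult_vec:
  assumes "W \<in> carrier_mat n n" "v \<in> carrier_vec n"
  shows "proj (W *\<^sub>v v) = W * proj v * adj W"
proof (rule eq_matI)
  fix i j assume "i < dim_row (W * proj v * adj W)" "j < dim_col (W * proj v * adj W)"
  then have i: "i < n" and j: "j < n" using assms by (auto simp: proj_def)
  have "(W * proj v * adj W) $$ (i, j) =
      (\<Sum>l<n. (\<Sum>k<n. W $$ (i, k) * (v $ k * cnj (v $ l))) * cnj (W $$ (j, l)))"
    using assms i j by (auto simp: proj_def scalar_prod_def lessThan_atLeast0)
  also have "\<dots> = (\<Sum>l<n. \<Sum>k<n. W $$ (i, k) * v $ k * cnj (W $$ (j, l) * v $ l))"
    unfolding sum_distrib_right by (simp add: mult_ac)
  also have "\<dots> = (\<Sum>k<n. W $$ (i, k) * v $ k) * cnj (\<Sum>l<n. W $$ (j, l) * v $ l)"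
    by (subst sum.swap) (simp only: cnj_sum sum_product)
  also have "\<dots> = proj (W *\<^sub>v v) $$ (i, j)"
    using assms i j by (auto simp: proj_def scalar_prod_def lessThan_atLeast0)
  finally show "proj (W *\<^sub>v v) $$ (i, j) = (W * proj v * adj W) $$ (i, j)" by simp
qed (use assms in \<open>auto simp: proj_def\<close>)

lemma sandwich_commute:
  assumes K: "K \<in> carrier_mat n n" and W: "W \<in> carrier_mat n n" and X: "X \<in> carrier_mat n n"
    and KW: "K * W = W * K"
  shows "K * (W * X * adj W) * adj K = W * (K * X * adj K) * adj W"
proof -
  have "adj W * adj K = adj K * adj W"
    using adj_mult[OF K W] adj_mult[OF W K] KW by simp
  moreover have "K * (W * X * adj W) * adj K = (K * W) * X * (adj W * adj K)"
    and "W * (K * X * adj K) * adj W = (W * K) * X * (adj K * adj W)"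
    using K W X by (simp_all add: assoc_mult_mat[of _ n n _ n _ n] mult_carrier_mat[of _ n n _ n])
  ultimately show ?thesis using KW by simp
qed

lemma sandwich_add:
  assumes "W \<in> carrier_mat n n" "A \<in> carrier_mat n n" "B \<in> carrier_mat n n"
  shows "W * (A + B) * adj W = W * A * adj W + W * B * adj W"
  using assms
  by (simp add: mult_add_distrib_mat[of _ n n] add_mult_distrib_mat[of _ n n _ _ n] mult_carrier_mat[of _ n n])

lemma sandwich_diff:
  assumes "W \<in> carrier_mat n n" "A \<in> carrier_mat n n" "B \<in> carrier_mat n n"
  shows "W * (A - B) * adj W = W * A * adj W - W * B * adj W"
  using assms
  by (simp add: mult_minus_distrib_mat[of _ n n] minus_mult_distrib_mat[of _ n n _ _ n] mult_carrier_mat[of _ n n])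

lemma amp_damp_A_carrier: "X \<in> carrier_mat 4 4 \<Longrightarrow> amp_damp_A \<mu> X \<in> carrier_mat 4 4"
  using kron_carrier[of "H0 \<mu>" "1\<^sub>m 2"] kron_carrier[of "H1 \<mu>" "1\<^sub>m 2"]
  by (auto simp: amp_damp_A_def H0_def H1_def)

lemma amp_damp_A_local_sandwich:
  assumes V: "V \<in> carrier_mat 2 2" and X: "X \<in> carrier_mat 4 4"
  defines "W \<equiv> kron (1\<^sub>m 2) V"
  shows "amp_damp_A \<mu> (W * X * adj W) = W * amp_damp_A \<mu> X * adj W"
proof -
  have W4: "W \<in> carrier_mat 4 4" using V kron_carrier[of "1\<^sub>m 2" V] by (simp add: W_def)
  have kraus_commute: "kron H (1\<^sub>m 2) * W = W * kron H (1\<^sub>m 2)"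
    and kraus_carrier: "kron H (1\<^sub>m 2) \<in> carrier_mat 4 4" if H: "H \<in> carrier_mat 2 2" for H
    using H V kron_carrier[of H "1\<^sub>m 2"] by (auto simp: W_def kron_mult)
  let ?K0 = "kron (H0 \<mu>) (1\<^sub>m 2)" and ?K1 = "kron (H1 \<mu>) (1\<^sub>m 2)"
  have H: "H0 \<mu> \<in> carrier_mat 2 2" "H1 \<mu> \<in> carrier_mat 2 2" by (simp_all add: H0_def H1_def)
  have "amp_damp_A \<mu> (W * X * adj W) = W * (?K0 * X * adj ?K0) * adj W + W * (?K1 * X * adj ?K1) * adj W"
    unfolding amp_damp_A_def
    using sandwich_commute[OF kraus_carrier W4 X kraus_commute] H by simp
  also have "\<dots> = W * amp_damp_A \<mu> X * adj W"
    unfolding amp_damp_A_def using W4 X H kraus_carrier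
    by (simp add: sandwich_add mult_carrier_mat[of _ 4 4])
  finally show ?thesis .
qed

lemma sum_atLeast0LessThan_4: "(\<Sum>i \<in> {0..<4}. f i) = f 0 + f 1 + f 2 + f (3 :: nat)"
  by (simp add: numeral_eq_Suc atLeast0LessThan)

definition bell :: "complex vec" where
  "bell = vec 4 (\<lambda>i. if i = 0 \<or> i = 3 then complex_of_real (1 / sqrt 2) else 0)"

text \<open>\<open>(1 \<otimes> V) \<Phi>\<^sup>+\<close> has coordinates \<open>V\<^sub>b\<^sub>a / \<surd>2\<close> at index \<open>2a + b\<close>, so this \<open>V\<close> maps \<open>\<Phi>\<^sup>+\<close> to \<open>\<psi>\<close>.\<close>

definition coeff_mat :: "complex vec \<Rightarrow> complex mat" where
  "coeff_mat \<psi> = mat 2 2 (\<lambda>(b, a). complex_of_real (sqrt 2) * \<psi> $ (2 * a + b))"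

lemma bell_carrier: "bell \<in> carrier_vec 4"
  by (simp add: bell_def)

lemma kron_one_coeff_mat_carrier: "kron (1\<^sub>m 2) (coeff_mat \<psi>) \<in> carrier_mat 4 4"
  using kron_carrier[of "1\<^sub>m 2" "coeff_mat \<psi>"] by (simp add: coeff_mat_def)

lemma kron_coeff_mat_bell:
  assumes "\<psi> \<in> carrier_vec 4"
  shows "kron (1\<^sub>m 2) (coeff_mat \<psi>) *\<^sub>v bell = \<psi>"
proof (rule eq_vecI)
  fix i assume "i < dim_vec \<psi>"
  then have "i = 0 \<or> i = 1 \<or> i = 2 \<or> i = 3" using assms by auto
  then show "(kron (1\<^sub>m 2) (coeff_mat \<psi>) *\<^sub>v bell) $ i = \<psi> $ i"
    by (auto simp: kron_def coeff_mat_def bell_def scalar_prod_def sum_atLeast0LessThan_4)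
qed (use assms in \<open>simp add: coeff_mat_def\<close>)

lemma coeff_mat_mult_adj:
  assumes "\<psi> \<in> carrier_vec 4"
  shows "coeff_mat \<psi> * adj (coeff_mat \<psi>) = 2 \<cdot>\<^sub>m ptrace_A (proj \<psi>)"
proof (rule eq_matI)
  fix b b' assume "b < dim_row (2 \<cdot>\<^sub>m ptrace_A (proj \<psi>))" "b' < dim_col (2 \<cdot>\<^sub>m ptrace_A (proj \<psi>))"
  then have b: "b < 2" "b' < 2" by (simp_all add: ptrace_A_def)
  have sqrt2: "complex_of_real (sqrt 2) * complex_of_real (sqrt 2) = 2"
    by (simp flip: of_real_mult)
  have "(coeff_mat \<psi> * adj (coeff_mat \<psi>)) $$ (b, b') =
      (\<Sum>a<2. complex_of_real (sqrt 2) * complex_of_real (sqrt 2)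
                * (\<psi> $ (2 * a + b) * cnj (\<psi> $ (2 * a + b'))))"
    using b by (simp add: coeff_mat_def scalar_prod_def atLeast0LessThan mult_ac)
  also have "\<dots> = (2 \<cdot>\<^sub>m ptrace_A (proj \<psi>)) $$ (b, b')"
    using b assms by (simp add: sqrt2 ptrace_A_def proj_def sum_distrib_left)
  finally show "(coeff_mat \<psi> * adj (coeff_mat \<psi>)) $$ (b, b') = (2 \<cdot>\<^sub>m ptrace_A (proj \<psi>)) $$ (b, b')" .
qed (simp_all add: coeff_mat_def ptrace_A_def)

lemma max_ent_pure_local_unitary:
  assumes "max_ent_pure \<rho>"
  obtains V where "unitary_mat 2 V"
    and "\<rho> = kron (1\<^sub>m 2) V * proj bell * adj (kron (1\<^sub>m 2) V)"
proof -
  obtain \<psi> where \<psi>: "\<psi> \<in> carrier_vec 4" and \<rho>: "\<rho> = proj \<psi>"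
    and A: "ptrace_A \<rho> = (1/2) \<cdot>\<^sub>m 1\<^sub>m 2"
    using assms unfolding max_ent_pure_def by blast
  have "2 \<cdot>\<^sub>m ((1/2) \<cdot>\<^sub>m 1\<^sub>m 2) = (1\<^sub>m 2 :: complex mat)"
    by (intro eq_matI) auto
  then have "unitary_mat 2 (coeff_mat \<psi>)"
    using coeff_mat_mult_adj[OF \<psi>] A unfolding \<rho> unitary_mat_def
    by (simp add: coeff_mat_def)
  moreover have "\<rho> = kron (1\<^sub>m 2) (coeff_mat \<psi>) * proj bell * adj (kron (1\<^sub>m 2) (coeff_mat \<psi>))"
    using proj_mult_vec[OF kron_one_coeff_mat_carrier[of \<psi>] bell_carrier]
    unfolding \<rho> kron_coeff_mat_bell[OF \<psi>] .
  ultimately show ?thesis using that by blast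
qed

lemma trace_norm_amp_damp_A_diff_max_ent:
  assumes "max_ent_pure \<rho>"
  shows "trace_norm (amp_damp_A \<mu>1 \<rho> - amp_damp_A \<mu>2 \<rho>)
       = trace_norm (amp_damp_A \<mu>1 (proj bell) - amp_damp_A \<mu>2 (proj bell))"
proof -
  obtain V where V: "unitary_mat 2 V"
    and \<rho>: "\<rho> = kron (1\<^sub>m 2) V * proj bell * adj (kron (1\<^sub>m 2) V)"
    using assms by (rule max_ent_pure_local_unitary)
  define W where "W = kron (1\<^sub>m 2) V"
  have W: "unitary_mat 4 W"
    using unitary_mat_kron[OF unitary_mat_one[of 2] V] by (simp add: W_def)
  then have W4: "W \<in> carrier_mat 4 4" by (simp add: unitary_mat_def)
  have \<Phi>: "proj bell \<in> carrier_mat 4 4" by (simp add: proj_def bell_def)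
  have channel_output: "amp_damp_A \<mu> \<rho> = W * amp_damp_A \<mu> (proj bell) * adj W" for \<mu>
    unfolding \<rho> W_def using V \<Phi> by (simp add: amp_damp_A_local_sandwich unitary_mat_def)
  have "amp_damp_A \<mu>1 \<rho> - amp_damp_A \<mu>2 \<rho>
      = W * (amp_damp_A \<mu>1 (proj bell) - amp_damp_A \<mu>2 (proj bell)) * adj W"
    unfolding channel_output using W4 \<Phi> by (simp add: sandwich_diff amp_damp_A_carrier)
  then show ?thesis
    using trace_norm_unitary_sandwich[OF W minus_carrier_mat[OF amp_damp_A_carrier[OF \<Phi>]]] by simp
qed

theorem lemma3:
  fixes \<mu>1 \<mu>2 :: real and \<rho> \<sigma> :: "complex mat"
  assumes "0 < \<mu>1" "\<mu>1 < 1" "0 < \<mu>2" "\<mu>2 < 1" "\<mu>1 > \<mu>2"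
    and "max_ent_pure \<rho>" and "max_ent_pure \<sigma>"
  shows "trace_norm (amp_damp_A \<mu>1 \<rho> - amp_damp_A \<mu>2 \<rho>)
       = trace_norm (amp_damp_A \<mu>1 \<sigma> - amp_damp_A \<mu>2 \<sigma>)"
  using assms(6,7) by (simp add: trace_norm_amp_damp_A_diff_max_ent)

end
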